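(* Let $N\in\mathbb N$, $F=\mathbb Z/N\mathbb Z$, $k\in\mathbb N_0$, and let $\sigma\in G_F$ be a $2k$-block configuration. Then \[4k\le\|\Delta A_F(\sigma)\|_1\le 4k^2,\] and $\|\Delta A_F(\sigma)\|_1$ is a multiple of $4$.
   Context: $G_F=\{-1,1\}^F$, $A_F(\sigma)_f=\sum_{j\in F}\sigma_j\sigma_{j+f}$, $(\Delta h)_f=\frac14(h_{f-1}-2h_f+h_{f+1})$, and $\|h\|_1=\sum_{f\in F}|h_f|$. A configuration $\sigma$ is a $2k$-block configuration if the number of $f\in F$ with $\sigma_f\neq\sigma_{f+1}$ equals $2k$ (equivalently, $\sigma$ is a cyclic translate of $(1)^{m_1}(-1)^{m_2}\cdots(1)^{m_{2k-1}}(-1)^{m_{2k}}$ with all $m_\ell\in\mathbb N$, or $\sigma=\pm\mathbf 1$ when $k=0$). *)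

theory Defs
  imports Main Complex_Main
begin

text \<open>F = Z/NZ represented by {0..<N}; configurations sigma : nat => int restricted to F.\<close>

definition config :: "nat \<Rightarrow> (nat \<Rightarrow> int) \<Rightarrow> bool" where
  "config N \<sigma> \<longleftrightarrow> (\<forall>f<N. \<sigma> f = 1 \<or> \<sigma> f = -1)"

definition autocorr :: "nat \<Rightarrow> (nat \<Rightarrow> int) \<Rightarrow> nat \<Rightarrow> int" where
  "autocorr N \<sigma> f = (\<Sum>j<N. \<sigma> j * \<sigma> ((j + f) mod N))"

definition dlap :: "nat \<Rightarrow> (nat \<Rightarrow> int) \<Rightarrow> nat \<Rightarrow> real" where
  "dlap N h f = (real_of_int (h ((f + N - 1) mod N)) - 2 * real_of_int (h f)
                 + real_of_int (h ((f + 1) mod N))) / 4"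

definition norm1 :: "nat \<Rightarrow> (nat \<Rightarrow> real) \<Rightarrow> real" where
  "norm1 N h = (\<Sum>f<N. \<bar>h f\<bar>)"

definition num_changes :: "nat \<Rightarrow> (nat \<Rightarrow> int) \<Rightarrow> nat" where
  "num_changes N \<sigma> = card {f. f < N \<and> \<sigma> f \<noteq> \<sigma> ((f + 1) mod N)}"

end

theory Submission
  imports Defs
begin

text \<open>Let \<open>u j = (\<sigma> (j + 1) - \<sigma> j) / 2\<close> (the function \<open>jump\<close> below), which takes values in
  \<open>{-1, 0, 1}\<close>. The second difference of a cyclic autocorrelation is minus the autocorrelation of
  the first difference, so \<open>-\<Delta>A\<^sub>F(\<sigma>)\<close> is the autocorrelation \<open>T\<close> of \<open>u\<close>. Now
  \<open>T 0 = (\<Sum>j. u j\<^sup>2) = 2k\<close>, \<open>(\<Sum>f. T f) = (\<Sum>j. u j)\<^sup>2 = 0\<close> and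
  \<open>(\<Sum>f. |T f|) \<le> (\<Sum>j. |u j|)\<^sup>2 = 4k\<^sup>2\<close>. The values \<open>T f\<close> with \<open>f \<noteq> 0\<close> sum to \<open>-2k\<close>, whence
  \<open>(\<Sum>f. |T f|) \<ge> 4k\<close>. Finally \<open>(\<Sum>f. |T f|) = 2 (\<Sum>f. max 0 (-T f))\<close>, and the last sum is even
  because \<open>T (N - f) = T f\<close>, \<open>T 0 \<ge> 0\<close> and \<open>T (N/2)\<close> is even.\<close>

lemma sum_mod_rotate:
  fixes g :: "nat \<Rightarrow> 'a::comm_monoid_add"
  shows "(\<Sum>i<n. g (Suc i mod n)) = (\<Sum>i<n. g i)"
proof (cases n)
  case (Suc m)
  have "(\<Sum>i<Suc m. g (Suc i mod Suc m)) = (\<Sum>i<m. g (Suc i)) + g 0"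
    by (simp add: sum.lessThan_Suc)
  also have "\<dots> = (\<Sum>i<Suc m. g i)"
    by (subst sum.lessThan_Suc_shift) (simp add: add.commute)
  finally show ?thesis using Suc by simp
qed simp

lemma sum_mod_shift:
  fixes g :: "nat \<Rightarrow> 'a::comm_monoid_add"
  shows "(\<Sum>i<n. g ((j + i) mod n)) = (\<Sum>i<n. g i)"
proof (induction j)
  case 0
  show ?case by (rule sum.cong) auto
next
  case (Suc j)
  have "(\<Sum>i<n. g ((Suc j + i) mod n)) = (\<Sum>i<n. g ((j + Suc i mod n) mod n))"
    by (rule sum.cong) (auto simp: mod_add_right_eq)
  also have "\<dots> = (\<Sum>i<n. g ((j + i) mod n))"
    by (rule sum_mod_rotate[of "\<lambda>i. g ((j + i) mod n)"])
  finally show ?case using Suc.IH by simp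
qed

lemma autocorr_cong:
  assumes "\<And>j. j < N \<Longrightarrow> g j = h j"
  shows "autocorr N g f = autocorr N h f"
  unfolding autocorr_def using assms by (intro sum.cong) auto

lemma autocorr_mod: "autocorr N g (f mod N) = autocorr N g f"
  unfolding autocorr_def by (simp add: mod_add_right_eq)

lemma autocorr_0: "autocorr N g 0 = (\<Sum>j<N. g j ^ 2)"
  unfolding autocorr_def by (intro sum.cong) (auto simp: power2_eq_square)

lemma autocorr_shift:
  "autocorr N g f = (\<Sum>j<N. g ((j + s) mod N) * g ((j + s + f) mod N))"
proof -
  have "autocorr N g f = (\<Sum>j<N. (\<lambda>i. g i * g ((i + f) mod N)) ((s + j) mod N))"
    unfolding autocorr_def by (rule sum_mod_shift[symmetric])
  also have "\<dots> = (\<Sum>j<N. g ((j + s) mod N) * g ((j + s + f) mod N))"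
    by (intro sum.cong) (simp_all add: mod_add_left_eq mod_add_right_eq add.commute)
  finally show ?thesis .
qed

lemma autocorr_reflect:
  assumes "f \<le> N"
  shows "autocorr N g (N - f) = autocorr N g f"
proof -
  have "autocorr N g (N - f) = (\<Sum>j<N. g ((j + f) mod N) * g ((j + f + (N - f)) mod N))"
    by (rule autocorr_shift)
  also have "\<dots> = (\<Sum>j<N. g j * g ((j + f) mod N))"
    using assms by (intro sum.cong) auto
  finally show ?thesis unfolding autocorr_def .
qed

lemma sum_autocorr: "(\<Sum>f<N. autocorr N g f) = (\<Sum>j<N. g j) ^ 2"
proof -
  have "(\<Sum>f<N. autocorr N g f) = (\<Sum>j<N. g j * (\<Sum>f<N. g ((j + f) mod N)))"
    unfolding autocorr_def sum_distrib_left by (rule sum.swap)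
  also have "\<dots> = (\<Sum>j<N. g j * (\<Sum>f<N. g f))"
    by (simp only: sum_mod_shift)
  finally show ?thesis by (simp only: power2_eq_square sum_distrib_right)
qed

lemma sum_abs_autocorr_le: "(\<Sum>f<N. \<bar>autocorr N g f\<bar>) \<le> (\<Sum>j<N. \<bar>g j\<bar>) ^ 2"
proof -
  have "(\<Sum>f<N. \<bar>autocorr N g f\<bar>) \<le> (\<Sum>f<N. \<Sum>j<N. \<bar>g j\<bar> * \<bar>g ((j + f) mod N)\<bar>)"
    unfolding autocorr_def abs_mult[symmetric] by (intro sum_mono sum_abs)
  also have "\<dots> = (\<Sum>j<N. \<bar>g j\<bar> * (\<Sum>f<N. \<bar>g ((j + f) mod N)\<bar>))"
    unfolding sum_distrib_left by (rule sum.swap)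
  also have "\<dots> = (\<Sum>j<N. \<bar>g j\<bar>) ^ 2"
    by (simp only: sum_mod_shift[of "\<lambda>i. \<bar>g i\<bar>"] power2_eq_square sum_distrib_right)
  finally show ?thesis .
qed

lemma autocorr_scale: "autocorr N (\<lambda>j. c * g j) f = c ^ 2 * autocorr N g f"
  unfolding autocorr_def sum_distrib_left by (intro sum.cong) (auto simp: power2_eq_square)

lemma autocorr_second_difference:
  assumes "0 < N"
  shows "autocorr N g ((f + N - 1) mod N) - 2 * autocorr N g f + autocorr N g ((f + 1) mod N)
         = - autocorr N (\<lambda>j. g ((j + 1) mod N) - g j) f"
proof -
  have pred: "autocorr N g ((f + N - 1) mod N) = (\<Sum>j<N. g ((j + 1) mod N) * g ((j + f) mod N))"
    unfolding autocorr_mod unfolding autocorr_shift[where s = 1]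
  proof (intro sum.cong refl)
    fix j
    have "j + 1 + (f + N - 1) = (j + f) + N" using assms by simp
    then show "g ((j + 1) mod N) * g ((j + 1 + (f + N - 1)) mod N) = g ((j + 1) mod N) * g ((j + f) mod N)"
      by (simp only: mod_add_self2)
  qed
  have here: "autocorr N g f = (\<Sum>j<N. g ((j + 1) mod N) * g ((j + f + 1) mod N))"
    unfolding autocorr_shift[where s = 1] by (simp add: ac_simps)
  have succ: "autocorr N g ((f + 1) mod N) = (\<Sum>j<N. g j * g ((j + f + 1) mod N))"
    unfolding autocorr_mod unfolding autocorr_def by (simp add: ac_simps)
  have "autocorr N (\<lambda>j. g ((j + 1) mod N) - g j) f
        = (\<Sum>j<N. g ((j + 1) mod N) * g ((j + f + 1) mod N) - g ((j + 1) mod N) * g ((j + f) mod N)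
                   - g j * g ((j + f + 1) mod N) + g j * g ((j + f) mod N))"
    unfolding autocorr_def by (intro sum.cong) (auto simp: mod_Suc_eq algebra_simps)
  also have "\<dots> = 2 * autocorr N g f - autocorr N g ((f + N - 1) mod N) - autocorr N g ((f + 1) mod N)"
    by (simp only: sum.distrib sum_subtractf pred[symmetric] here[symmetric] succ[symmetric]
                   autocorr_def[of N g f, symmetric])
  finally show ?thesis by simp
qed

text \<open>The summands for \<open>j\<close> and \<open>j + h\<close> coincide.\<close>

lemma even_autocorr_half:
  assumes "N = 2 * h"
  shows "even (autocorr N g h)"
proof -
  have "autocorr N g h = (\<Sum>j\<in>{0..<h}. g j * g ((j + h) mod N)) + (\<Sum>j\<in>{h..<h + h}. g j * g ((j + h) mod N))"
    unfolding autocorr_def assms mult_2 lessThan_atLeast0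
    by (rule sum.atLeastLessThan_concat[symmetric]) simp_all
  also have "(\<Sum>j\<in>{h..<h + h}. g j * g ((j + h) mod N)) = (\<Sum>j\<in>{0..<h}. g (j + h) * g ((j + h + h) mod N))"
    using sum.shift_bounds_nat_ivl[of "\<lambda>j. g j * g ((j + h) mod N)" 0 h h] by simp
  also have "\<dots> = (\<Sum>j\<in>{0..<h}. g j * g ((j + h) mod N))"
  proof (intro sum.cong refl)
    fix j assume "j \<in> {0..<h}"
    then have "(j + h + h) mod N = j" and "(j + h) mod N = j + h"
      using assms by (simp_all add: mult_2 mod_if)
    then show "g (j + h) * g ((j + h + h) mod N) = g j * g ((j + h) mod N)"
      by simp
  qed
  finally show ?thesis by simp
qed

lemma even_sum_reflect:
  fixes a :: "nat \<Rightarrow> 'a::semiring_parity"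
  assumes reflect: "\<And>f. 0 < f \<Longrightarrow> f < N \<Longrightarrow> a (N - f) = a f"
    and even_0: "even (a 0)"
    and even_half: "\<And>h. N = 2 * h \<Longrightarrow> even (a h)"
  shows "even (\<Sum>f<N. a f)"
proof -
  define L where "L = {f. 0 < f \<and> 2 * f < N}"
  define M where "M = {f. 0 < f \<and> 2 * f = N}"
  define R where "R = {f. N < 2 * f \<and> f < N}"
  define Z where "Z = {0} \<inter> {..<N}"
  have fin: "finite Z" "finite L" "finite M" "finite R"
    unfolding Z_def L_def M_def R_def by (auto intro: finite_subset[of _ "{..<N}"])
  have disj: "Z \<inter> (L \<union> (M \<union> R)) = {}" "L \<inter> (M \<union> R) = {}" "M \<inter> R = {}"
    unfolding Z_def L_def M_def R_def by auto
  have "{..<N} = Z \<union> (L \<union> (M \<union> R))"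
    unfolding Z_def L_def M_def R_def by auto
  then have "(\<Sum>f<N. a f) = sum a Z + sum a L + sum a M + sum a R"
    using fin disj by (simp add: sum.union_disjoint add.assoc)
  also have "sum a R = sum a L"
    by (rule sum.reindex_bij_witness[where i="\<lambda>f. N - f" and j="\<lambda>f. N - f"])
       (auto simp: L_def R_def reflect)
  finally have split: "(\<Sum>f<N. a f) = sum a Z + sum a M + 2 * sum a L"
    by (simp only: mult_2) (simp add: ac_simps)
  have "M = {} \<or> (\<exists>h. N = 2 * h \<and> M = {h})"
    unfolding M_def by auto
  then have "even (sum a M)"
    using even_half by auto
  moreover have "even (sum a Z)"
    using even_0 by (cases N) (auto simp: Z_def)
  ultimately show ?thesis
    unfolding split by simp
qed

lemma autocorr_0_nonneg: "0 \<le> autocorr N g 0"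
  unfolding autocorr_0 by (intro sum_nonneg) simp

lemma sum_abs_autocorr_ge:
  assumes "0 < N" and "(\<Sum>j<N. g j) = 0"
  shows "2 * autocorr N g 0 \<le> (\<Sum>f<N. \<bar>autocorr N g f\<bar>)"
proof -
  have zero: "0 \<in> {..<N}" using assms(1) by simp
  have "autocorr N g 0 + (\<Sum>f\<in>{..<N} - {0}. autocorr N g f) = 0"
    using sum_autocorr[of N g] assms(2) sum.remove[OF _ zero, of "autocorr N g"] by simp
  then have "autocorr N g 0 \<le> (\<Sum>f\<in>{..<N} - {0}. \<bar>autocorr N g f\<bar>)"
    using sum_abs[of "autocorr N g" "{..<N} - {0}"] by linarith
  then show ?thesis
    using sum.remove[OF _ zero, of "\<lambda>f. \<bar>autocorr N g f\<bar>"] autocorr_0_nonneg[of N g] by simp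
qed

lemma four_dvd_sum_abs_autocorr:
  assumes "(\<Sum>j<N. g j) = 0"
  shows "4 dvd (\<Sum>f<N. \<bar>autocorr N g f\<bar>)"
proof -
  define neg where "neg f = max 0 (- autocorr N g f)" for f
  have "(\<Sum>f<N. \<bar>autocorr N g f\<bar>) = (\<Sum>f<N. autocorr N g f + 2 * neg f)"
    unfolding neg_def by (intro sum.cong) auto
  also have "\<dots> = 2 * (\<Sum>f<N. neg f)"
    using sum_autocorr[of N g] assms by (simp add: sum.distrib sum_distrib_left)
  finally have abs_sum: "(\<Sum>f<N. \<bar>autocorr N g f\<bar>) = 2 * (\<Sum>f<N. neg f)" .
  have "even (\<Sum>f<N. neg f)"
  proof (rule even_sum_reflect)
    show "neg (N - f) = neg f" if "0 < f" "f < N" for f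
      using that autocorr_reflect[of f N g] by (simp add: neg_def)
    show "even (neg 0)"
      using autocorr_0_nonneg[of N g] by (simp add: neg_def)
    show "even (neg h)" if "N = 2 * h" for h
      using even_autocorr_half[OF that, of g] by (simp add: neg_def max_def)
  qed
  then show ?thesis
    unfolding abs_sum by auto
qed

lemma sum_cyclic_difference:
  fixes g :: "nat \<Rightarrow> 'a::ab_group_add"
  shows "(\<Sum>j<N. g ((j + 1) mod N) - g j) = 0"
  using sum_mod_shift[of g 1 N] by (simp add: sum_subtractf add.commute)

definition jump :: "nat \<Rightarrow> (nat \<Rightarrow> int) \<Rightarrow> nat \<Rightarrow> int" where
  "jump N \<sigma> j = (\<sigma> ((j + 1) mod N) - \<sigma> j) div 2"

context
  fixes N :: nat and \<sigma> :: "nat \<Rightarrow> int"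
  assumes config: "config N \<sigma>"
begin

lemma config_values:
  assumes "j < N"
  shows "\<sigma> j \<in> {1, -1}" "\<sigma> ((j + 1) mod N) \<in> {1, -1}"
  using config assms unfolding config_def by auto

lemma difference_eq_jump:
  assumes "j < N"
  shows "\<sigma> ((j + 1) mod N) - \<sigma> j = 2 * jump N \<sigma> j"
  using config_values[OF assms] unfolding jump_def by auto

lemma abs_jump:
  assumes "j < N"
  shows "\<bar>jump N \<sigma> j\<bar> = (if \<sigma> j \<noteq> \<sigma> ((j + 1) mod N) then 1 else 0)"
  using config_values[OF assms] unfolding jump_def by auto

lemma jump_squared:
  assumes "j < N"
  shows "jump N \<sigma> j ^ 2 = \<bar>jump N \<sigma> j\<bar>"
  using abs_jump[OF assms] by (auto simp: abs_if power2_eq_square split: if_splits)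

lemma sum_jump: "(\<Sum>j<N. jump N \<sigma> j) = 0"
proof -
  have "2 * (\<Sum>j<N. jump N \<sigma> j) = (\<Sum>j<N. \<sigma> ((j + 1) mod N) - \<sigma> j)"
    unfolding sum_distrib_left by (intro sum.cong refl) (metis difference_eq_jump lessThan_iff)
  then show ?thesis
    using sum_cyclic_difference[of \<sigma> N] by simp
qed

lemma sum_abs_jump: "(\<Sum>j<N. \<bar>jump N \<sigma> j\<bar>) = int (num_changes N \<sigma>)"
proof -
  have "(\<Sum>j<N. \<bar>jump N \<sigma> j\<bar>) = (\<Sum>j\<in>{..<N}. if \<sigma> j \<noteq> \<sigma> ((j + 1) mod N) then 1 else 0)"
    by (intro sum.cong) (simp_all add: abs_jump)
  also have "\<dots> = int (card {f. f < N \<and> \<sigma> f \<noteq> \<sigma> ((f + 1) mod N)})"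
    by (simp add: sum.If_cases Int_def lessThan_def conj_commute)
  finally show ?thesis
    unfolding num_changes_def .
qed

lemma autocorr_jump_0: "autocorr N (jump N \<sigma>) 0 = int (num_changes N \<sigma>)"
  unfolding autocorr_0 sum_abs_jump[symmetric] by (intro sum.cong) (simp_all add: jump_squared)

lemma dlap_autocorr:
  assumes "0 < N"
  shows "dlap N (autocorr N \<sigma>) f = - of_int (autocorr N (jump N \<sigma>) f)"
proof -
  have "autocorr N (\<lambda>j. \<sigma> ((j + 1) mod N) - \<sigma> j) f = autocorr N (\<lambda>j. 2 * jump N \<sigma> j) f"
    by (intro autocorr_cong) (rule difference_eq_jump)
  then have "autocorr N \<sigma> ((f + N - 1) mod N) - 2 * autocorr N \<sigma> f + autocorr N \<sigma> ((f + 1) mod N)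
             = - 4 * autocorr N (jump N \<sigma>) f"
    unfolding autocorr_second_difference[OF assms] autocorr_scale by simp
  then show ?thesis
    unfolding dlap_def by (simp add: of_int_diff[symmetric] of_int_add[symmetric])
qed

end

theorem mainTheorem10:
  fixes N k :: nat and \<sigma> :: "nat \<Rightarrow> int"
  assumes "N \<ge> 1"
    and "config N \<sigma>"
    and "num_changes N \<sigma> = 2 * k"
  shows "4 * real k \<le> norm1 N (dlap N (autocorr N \<sigma>))
       \<and> norm1 N (dlap N (autocorr N \<sigma>)) \<le> 4 * (real k)^2
       \<and> (\<exists>m::int. norm1 N (dlap N (autocorr N \<sigma>)) = 4 * real_of_int m)"
proof -
  have N: "0 < N" using assms(1) by simp
  define S where "S = (\<Sum>f<N. \<bar>autocorr N (jump N \<sigma>) f\<bar>)"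
  have norm: "norm1 N (dlap N (autocorr N \<sigma>)) = of_int S"
    unfolding norm1_def S_def dlap_autocorr[OF assms(2) N] by simp
  have "4 * int k \<le> S"
    using sum_abs_autocorr_ge[OF N sum_jump[OF assms(2)]]
    unfolding S_def autocorr_jump_0[OF assms(2)] assms(3) by simp
  then have lower: "4 * real k \<le> of_int S"
    by linarith
  have "S \<le> 4 * int k ^ 2"
    using sum_abs_autocorr_le[of N "jump N \<sigma>"]
    unfolding S_def sum_abs_jump[OF assms(2)] assms(3) by (simp add: power_mult_distrib)
  then have "real_of_int S \<le> of_int (4 * int k ^ 2)"
    by (simp only: of_int_le_iff)
  then have upper: "of_int S \<le> 4 * real k ^ 2"
    by simp
  obtain m where "S = 4 * m"
    using four_dvd_sum_abs_autocorr[OF sum_jump[OF assms(2)]] unfolding S_def by blast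
  then show ?thesis
    unfolding norm using lower upper by simp
qed
end
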